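(* Let $q\neq-1$ be real and $n\ge0$. Then $$T_n(x,s,q)=\sum_{k=0}^{\lfloor n/2\rfloor}q^{k^2}\frac{(1+q)\cdots(1+q^{n-1})}{(1+q)\cdots(1+q^{k})\cdot(1+q^{n-k})\cdots(1+q^{n-1})}\,\frac{[n]}{[n-k]}\begin{bmatrix} n-k\\ k\end{bmatrix}s^kx^{n-2k}$$ $$=\sum_{k=0}^{\lfloor (n-1)/2\rfloor}q^{k^2}(1+q^{k+1})\cdots(1+q^{n-k-1})\frac{[n]}{[n-k]}\begin{bmatrix} n-k\\ k\end{bmatrix}s^kx^{n-2k}+[n\equiv 0 \pmod 2]\,q^{(n/2)^2}s^{n/2}.$$
   Context: $T_0=1$, $T_1=x$, $T_n(x,s,q)=(1+q^{n-1})x\,T_{n-1}(x,s,q)+q^{n-1}s\,T_{n-2}(x,s,q)$ for $n\ge2$. Notation: $[m]=1+q+\cdots+q^{m-1}$, $[m]!=[1]\cdots[m]$, $\begin{bmatrix} m\\ j\end{bmatrix}=\frac{[m]!}{[j]![m-j]!}$; empty products equal $1$; $[P]$ is the Iverson bracket ($1$ if $P$ holds, $0$ otherwise). For $n=0$ the term $\frac{[n]}{[n-k]}$ with $k=0$ is read as $1$. *)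

theory Defs
  imports Complex_Main
begin

fun T :: "real \<Rightarrow> real \<Rightarrow> real \<Rightarrow> nat \<Rightarrow> real" where
  "T x s q 0 = 1"
| "T x s q (Suc 0) = x"
| "T x s q (Suc (Suc n)) =
     (1 + q ^ (Suc n)) * x * T x s q (Suc n) + q ^ (Suc n) * s * T x s q n"

definition qint :: "real \<Rightarrow> nat \<Rightarrow> real" where
  "qint q m = (\<Sum>i<m. q ^ i)"

definition qfact :: "real \<Rightarrow> nat \<Rightarrow> real" where
  "qfact q m = (\<Prod>i=1..m. qint q i)"

definition qbinom :: "real \<Rightarrow> nat \<Rightarrow> nat \<Rightarrow> real" where
  "qbinom q m j = qfact q m / (qfact q j * qfact q (m - j))"

end

theory Submission
  imports Defs
begin

text \<open>Both sums equal \<open>\<Sum>k. c(n,k) s^k x^(n-2k)\<close> with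
\<open>c(n,k) = q^(k^2) [n] [2][4]\<cdots>[2(n-k-1)] / ([2][4]\<cdots>[2k] [n-2k]!)\<close>, and these
coefficients satisfy the defining recurrence of \<open>T\<close>. Since \<open>[2i] = (1+q^i)[i]\<close>, that
recurrence reduces to a single polynomial identity between products of two \<open>q\<close>-integers.
The hypothesis \<open>q \<noteq> -1\<close> keeps all \<open>q\<close>-integers and factors \<open>1 + q^i\<close> in denominators
nonzero.\<close>

lemma qint_0 [simp]: "qint q 0 = 0"
  by (simp add: qint_def)

lemma qint_Suc: "qint q (Suc m) = qint q m + q ^ m"
  by (simp add: qint_def)

lemma one_minus_mult_qint: "(1 - q) * qint q m = 1 - q ^ m"
proof (induction m)
  case (Suc m)
  have "(1 - q) * qint q (Suc m) = (1 - q) * qint q m + (1 - q) * q ^ m"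
    by (simp add: qint_Suc algebra_simps)
  then show ?case
    unfolding Suc.IH by (simp add: algebra_simps)
qed simp

lemma qint_one: "qint 1 m = real m"
  by (simp add: qint_def)

lemma qint_add: "qint q (a + b) = qint q a + q ^ a * qint q b"
  by (induction b) (simp_all add: qint_Suc power_add algebra_simps)

lemma qint_double: "qint q (2 * m) = (1 + q ^ m) * qint q m"
  unfolding mult_2 qint_add by (simp add: algebra_simps)

lemma abs_eq_1_if_power_eq_pm1:
  fixes q :: real
  assumes "q ^ m = 1 \<or> q ^ m = -1" and "m \<noteq> 0"
  shows "\<bar>q\<bar> = 1"
proof -
  have "\<bar>q\<bar> ^ m = 1"
    using assms(1) by (auto simp flip: power_abs)
  then show ?thesis
    using power_eq_1_iff[of "\<bar>q\<bar>" m] assms(2) by simp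
qed

lemma qint_nonzero:
  assumes "q \<noteq> -1" and "m \<noteq> 0"
  shows "qint q m \<noteq> 0"
proof
  assume zero: "qint q m = 0"
  show False
  proof (cases "q = 1")
    case True
    with zero assms(2) show False by (simp add: qint_one)
  next
    case False
    have "q ^ m = 1"
      using one_minus_mult_qint[of q m] zero by simp
    then have "\<bar>q\<bar> = 1"
      using abs_eq_1_if_power_eq_pm1 assms(2) by blast
    with False assms(1) show False by (auto simp: abs_if split: if_splits)
  qed
qed

lemma one_plus_power_nonzero:
  fixes q :: real
  assumes "q \<noteq> -1"
  shows "1 + q ^ i \<noteq> 0"
proof
  assume "1 + q ^ i = 0"
  then have minus_one: "q ^ i = -1" by simp
  then have "i \<noteq> 0" by (cases i) simp_all
  with minus_one have "\<bar>q\<bar> = 1"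
    using abs_eq_1_if_power_eq_pm1 by blast
  with assms minus_one show False by (auto simp: abs_if split: if_splits)
qed

definition neg_qpoch :: "real \<Rightarrow> nat \<Rightarrow> real" where
  "neg_qpoch q m = (\<Prod>i=1..m. 1 + q ^ i)"

definition qfact_even :: "real \<Rightarrow> nat \<Rightarrow> real" where
  "qfact_even q m = (\<Prod>i=1..m. qint q (2 * i))"

lemma neg_qpoch_0 [simp]: "neg_qpoch q 0 = 1"
  by (simp add: neg_qpoch_def)

lemma neg_qpoch_Suc: "neg_qpoch q (Suc m) = neg_qpoch q m * (1 + q ^ Suc m)"
  by (simp add: neg_qpoch_def)

lemma neg_qpoch_atLeastLessThan: "neg_qpoch q m = (\<Prod>i\<in>{1..<Suc m}. 1 + q ^ i)"
  by (simp add: neg_qpoch_def atLeastLessThanSuc_atLeastAtMost)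

lemma qfact_0 [simp]: "qfact q 0 = 1"
  by (simp add: qfact_def)

lemma qfact_Suc: "qfact q (Suc m) = qfact q m * qint q (Suc m)"
  by (simp add: qfact_def)

lemma qfact_even_0 [simp]: "qfact_even q 0 = 1"
  by (simp add: qfact_even_def)

lemma qfact_even_Suc: "qfact_even q (Suc m) = qfact_even q m * qint q (2 * Suc m)"
  by (simp add: qfact_even_def)

lemma qfact_even_eq: "qfact_even q m = qfact q m * neg_qpoch q m"
proof (induction m)
  case (Suc m)
  show ?case
    using qint_double[of q "Suc m"] by (simp add: qfact_even_Suc qfact_Suc neg_qpoch_Suc Suc.IH)
qed simp

lemma neg_qpoch_nonzero: "q \<noteq> -1 \<Longrightarrow> neg_qpoch q m \<noteq> 0"
  by (simp add: neg_qpoch_def one_plus_power_nonzero)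

lemma qfact_nonzero: "q \<noteq> -1 \<Longrightarrow> qfact q m \<noteq> 0"
  by (simp add: qfact_def qint_nonzero)

lemma qfact_even_nonzero: "q \<noteq> -1 \<Longrightarrow> qfact_even q m \<noteq> 0"
  by (simp add: qfact_even_eq neg_qpoch_nonzero qfact_nonzero)

text \<open>For \<open>n = 0\<close> the general formula would give \<open>[0] = 0\<close> instead of \<open>T\<^sub>0 = 1\<close>,
hence the separate case.\<close>

definition Tcoeff :: "real \<Rightarrow> nat \<Rightarrow> nat \<Rightarrow> real" where
  "Tcoeff q n k =
     (if n = 0 then (if k = 0 then 1 else 0)
      else if 2 * k \<le> n
      then q ^ (k\<^sup>2) * qint q n * qfact_even q (n - k - 1) / (qfact_even q k * qfact q (n - 2 * k))
      else 0)"

lemma Tcoeff_eq_0: "n < 2 * k \<Longrightarrow> Tcoeff q n k = 0"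
  by (simp add: Tcoeff_def)

lemma Tcoeff_diagonal:
  assumes "q \<noteq> -1"
  shows "Tcoeff q (2 * k) k = q ^ (k\<^sup>2)"
proof (cases k)
  case (Suc j)
  then have "Tcoeff q (2 * k) k = q ^ (k\<^sup>2) * qint q (2 * Suc j) * qfact_even q j / qfact_even q (Suc j)"
    by (simp add: Tcoeff_def)
  with Suc show ?thesis
    using qfact_even_nonzero[OF assms, of j] qint_nonzero[OF assms, of "2 * Suc j"]
    by (simp add: qfact_even_Suc del: mult_Suc_right)
qed (simp add: Tcoeff_def)

lemma Tcoeff_Suc_0:
  assumes "q \<noteq> -1"
  shows "Tcoeff q (Suc n) 0 = neg_qpoch q n"
proof -
  have "Tcoeff q (Suc n) 0 = qint q (Suc n) * (qfact q n * neg_qpoch q n) / (qfact q n * qint q (Suc n))"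
    by (simp add: Tcoeff_def qfact_even_eq qfact_Suc)
  then show ?thesis
    using qint_nonzero[OF assms, of "Suc n"] qfact_nonzero[OF assms, of n] by simp
qed

lemma qint_quadratic_identity:
  "qint q (2*k + m + 3) * qint q (2*k + 2*m + 2)
     = (1 + q ^ (2*k + m + 2)) * qint q (2*k + m + 2) * qint q (m + 1)
       + q ^ (m + 1) * qint q (2*k + m + 1) * qint q (2*k + 2)"
proof (cases "q = 1")
  case True
  then show ?thesis by (simp add: qint_one algebra_simps)
next
  case False
  define a b where "a = q ^ k" and "b = q ^ m"
  have powers: "q ^ (2*k + m + 3) = a * a * b * q * q * q"
    "q ^ (2*k + 2*m + 2) = a * a * b * b * q * q"
    "q ^ (2*k + m + 2) = a * a * b * q * q"
    "q ^ (m + 1) = b * q"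
    "q ^ (2*k + m + 1) = a * a * b * q"
    "q ^ (2*k + 2) = a * a * q * q"
    unfolding a_def b_def by (simp_all add: power_add mult_2 eval_nat_numeral algebra_simps)
  have "(1 - q) * (1 - q) * (qint q (2*k + m + 3) * qint q (2*k + 2*m + 2))
      = (1 - q) * (1 - q) * ((1 + q ^ (2*k + m + 2)) * qint q (2*k + m + 2) * qint q (m + 1)
          + q ^ (m + 1) * qint q (2*k + m + 1) * qint q (2*k + 2))"
  proof -
    have "(1 - q) * qint q (2*k + m + 3) = 1 - a * a * b * q * q * q"
      "(1 - q) * qint q (2*k + 2*m + 2) = 1 - a * a * b * b * q * q"
      "(1 - q) * qint q (2*k + m + 2) = 1 - a * a * b * q * q"
      "(1 - q) * qint q (m + 1) = 1 - b * q"
      "(1 - q) * qint q (2*k + m + 1) = 1 - a * a * b * q"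
      "(1 - q) * qint q (2*k + 2) = 1 - a * a * q * q"
      unfolding one_minus_mult_qint powers by simp_all
    then show ?thesis unfolding powers by algebra
  qed
  with False show ?thesis by simp
qed

lemma Tcoeff_recurrence_interior:
  assumes "q \<noteq> -1"
  shows "Tcoeff q (2*k + m + 3) (Suc k)
    = (1 + q ^ (2*k + m + 2)) * Tcoeff q (2*k + m + 2) (Suc k) + q ^ (2*k + m + 2) * Tcoeff q (2*k + m + 1) k"
proof -
  have nonzero: "qfact_even q k \<noteq> 0" "qint q (2*k + 2) \<noteq> 0" "qfact q m \<noteq> 0" "qint q (m + 1) \<noteq> 0"
    using qfact_even_nonzero[OF assms] qint_nonzero[OF assms] qfact_nonzero[OF assms] by auto
  have "(Suc k)\<^sup>2 = k\<^sup>2 + (2*k + 1)"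
    by (simp add: power2_eq_square)
  then have square: "q ^ ((Suc k)\<^sup>2) = q ^ (k\<^sup>2) * q ^ (2*k + 1)"
    by (simp add: power_add)
  \<comment> \<open>Factoring out \<open>Z\<close> leaves the three products of \<open>qint_quadratic_identity\<close>.\<close>
  define Z where "Z = q ^ (k\<^sup>2) * q ^ (2*k + 1) * qfact_even q (k + m)
    / (qfact_even q k * qint q (2*k + 2) * qfact q m * qint q (m + 1))"
  have "Tcoeff q (2*k + m + 3) (Suc k)
      = q ^ ((Suc k)\<^sup>2) * qint q (2*k + m + 3) * (qfact_even q (k + m) * qint q (2*k + 2*m + 2))
        / (qfact_even q k * qint q (2*k + 2) * (qfact q m * qint q (m + 1)))"
    using qfact_even_Suc[of q "k + m"] qfact_even_Suc[of q k] qfact_Suc[of q m]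
    by (simp add: Tcoeff_def algebra_simps)
  also have "\<dots> = Z * (qint q (2*k + m + 3) * qint q (2*k + 2*m + 2))"
    unfolding square Z_def using nonzero by (simp add: field_simps)
  finally have top: "Tcoeff q (2*k + m + 3) (Suc k) = \<dots>" .
  have "Tcoeff q (2*k + m + 2) (Suc k)
      = q ^ ((Suc k)\<^sup>2) * qint q (2*k + m + 2) * qfact_even q (k + m) / (qfact_even q k * qint q (2*k + 2) * qfact q m)"
    using qfact_even_Suc[of q k] by (simp add: Tcoeff_def algebra_simps)
  also have "\<dots> = Z * (qint q (2*k + m + 2) * qint q (m + 1))"
    unfolding square Z_def using nonzero by (simp add: field_simps)
  finally have middle: "Tcoeff q (2*k + m + 2) (Suc k) = \<dots>" .
  have "Tcoeff q (2*k + m + 1) k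
      = q ^ (k\<^sup>2) * qint q (2*k + m + 1) * qfact_even q (k + m) / (qfact_even q k * (qfact q m * qint q (m + 1)))"
    using qfact_Suc[of q m] by (simp add: Tcoeff_def algebra_simps)
  also have "q ^ (2*k + m + 2) * \<dots> = Z * (q ^ (m + 1) * qint q (2*k + m + 1) * qint q (2*k + 2))"
    unfolding Z_def using nonzero by (simp add: field_simps flip: power_add)
  finally have bottom: "q ^ (2*k + m + 2) * Tcoeff q (2*k + m + 1) k = \<dots>" .
  show ?thesis
    unfolding top middle bottom qint_quadratic_identity by (simp add: algebra_simps)
qed

lemma Tcoeff_recurrence:
  assumes "q \<noteq> -1"
  shows "Tcoeff q (Suc (Suc n)) (Suc k) = (1 + q ^ Suc n) * Tcoeff q (Suc n) (Suc k) + q ^ Suc n * Tcoeff q n k"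
proof -
  consider "n < 2 * k" | "n = 2 * k" | m where "n = 2*k + m + 1"
    by (metis add.commute add_Suc_right less_imp_Suc_add linorder_neqE_nat plus_1_eq_Suc)
  then show ?thesis
  proof cases
    case 1
    then show ?thesis by (simp add: Tcoeff_eq_0)
  next
    case 2
    have "(Suc k)\<^sup>2 = k\<^sup>2 + Suc n"
      using 2 by (simp add: power2_eq_square)
    then show ?thesis
      using 2 Tcoeff_diagonal[OF assms, of k] Tcoeff_diagonal[OF assms, of "Suc k"]
      by (simp add: Tcoeff_eq_0 power_add)
  next
    case 3
    then show ?thesis
      using Tcoeff_recurrence_interior[OF assms, of k m] by (simp add: numeral_eq_Suc)
  qed
qed

lemma x_mult_Tcoeff_term:
  "x * (Tcoeff q (Suc n) (Suc k) * y * x ^ (Suc n - 2 * Suc k)) = Tcoeff q (Suc n) (Suc k) * y * x ^ (n - 2 * k)"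
proof (cases "2 * Suc k \<le> Suc n")
  case True
  then have "n - 2 * k = Suc (Suc n - 2 * Suc k)" by simp
  then show ?thesis by simp
qed (simp add: Tcoeff_eq_0)

lemma T_eq_sum_Tcoeff:
  assumes "q \<noteq> -1" and "n \<le> N"
  shows "T x s q n = (\<Sum>k\<le>N. Tcoeff q n k * s ^ k * x ^ (n - 2 * k))"
  using assms
proof (induction x s q n arbitrary: N rule: T.induct)
  case (1 x s q)
  show ?case by (simp add: sum.atMost_shift Tcoeff_def)
next
  case (2 x s q)
  show ?case by (simp add: sum.atMost_shift Tcoeff_def qfact_def qint_def)
next
  case (3 x s q n)
  let ?c = "Tcoeff q"
  note q = "3.prems"(1)
  obtain M where M: "N = Suc M" "Suc n \<le> M"
    using "3.prems"(2) by (metis Suc_le_D Suc_le_mono)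
  have "T x s q (Suc n)
      = ?c (Suc n) 0 * x ^ Suc n + (\<Sum>k\<le>M. ?c (Suc n) (Suc k) * s ^ Suc k * x ^ (Suc n - 2 * Suc k))"
    using "3.IH"(1)[OF q, of N] M unfolding M(1) sum.atMost_Suc_shift by simp
  then have x_T: "x * T x s q (Suc n)
      = ?c (Suc n) 0 * x ^ Suc (Suc n) + (\<Sum>k\<le>M. ?c (Suc n) (Suc k) * s ^ Suc k * x ^ (n - 2 * k))"
    by (simp only: distrib_left sum_distrib_left x_mult_Tcoeff_term) (simp add: algebra_simps)
  have s_T: "s * T x s q n = (\<Sum>k\<le>M. ?c n k * s ^ Suc k * x ^ (n - 2 * k))"
    using "3.IH"(2)[OF q, of M] M by (simp add: sum_distrib_left algebra_simps)
  have "T x s q (Suc (Suc n)) = (1 + q ^ Suc n) * (x * T x s q (Suc n)) + q ^ Suc n * (s * T x s q n)"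
    by (simp add: algebra_simps)
  also have "\<dots> = (1 + q ^ Suc n) * ?c (Suc n) 0 * x ^ Suc (Suc n)
      + (\<Sum>k\<le>M. ((1 + q ^ Suc n) * ?c (Suc n) (Suc k) + q ^ Suc n * ?c n k) * s ^ Suc k * x ^ (n - 2 * k))"
    unfolding x_T s_T by (simp add: sum_distrib_left sum.distrib algebra_simps)
  also have "\<dots> = (\<Sum>k\<le>N. ?c (Suc (Suc n)) k * s ^ k * x ^ (Suc (Suc n) - 2 * k))"
    unfolding M sum.atMost_Suc_shift
    by (simp add: Tcoeff_Suc_0 neg_qpoch_Suc Tcoeff_recurrence q algebra_simps)
  finally show ?case .
qed

lemma T_eq_sum_Tcoeff_half:
  assumes "q \<noteq> -1"
  shows "T x s q n = (\<Sum>k=0..n div 2. Tcoeff q n k * s ^ k * x ^ (n - 2 * k))"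
proof -
  have "T x s q n = (\<Sum>k\<le>n. Tcoeff q n k * s ^ k * x ^ (n - 2 * k))"
    using T_eq_sum_Tcoeff[OF assms order_refl] .
  also have "\<dots> = (\<Sum>k=0..n div 2. Tcoeff q n k * s ^ k * x ^ (n - 2 * k))"
    by (rule sum.mono_neutral_right) (auto simp: Tcoeff_eq_0)
  finally show ?thesis .
qed

lemma sum_upto_half_split:
  fixes n :: nat
  shows "(\<Sum>k=0..n div 2. f k) = (\<Sum>k<(n + 1) div 2. f k) + (if even n then f (n div 2) else 0)"
proof (cases "even n")
  case True
  then have "{0..n div 2} = insert (n div 2) {..<(n + 1) div 2}" by auto
  with True show ?thesis by (simp add: add.commute)
next
  case False
  then have "{0..n div 2} = {..<(n + 1) div 2}" by auto
  with False show ?thesis by simp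
qed

lemma Tcoeff_eq_qbinom:
  assumes "q \<noteq> -1" and "n \<noteq> 0" and "2 * k \<le> n"
  shows "Tcoeff q n k
    = q ^ (k\<^sup>2) * (neg_qpoch q (n - k - 1) / neg_qpoch q k) * (qint q n / qint q (n - k)) * qbinom q (n - k) k"
proof -
  have "qfact q (n - k) = qfact q (n - k - 1) * qint q (n - k)"
    using qfact_Suc[of q "n - k - 1"] assms(2,3) by (simp add: Suc_diff_Suc)
  then have "qbinom q (n - k) k = qfact q (n - k - 1) * qint q (n - k) / (qfact q k * qfact q (n - 2 * k))"
    by (simp add: qbinom_def diff_diff_left mult_2)
  moreover have "qint q (n - k) \<noteq> 0" "neg_qpoch q k \<noteq> 0"
    using assms qint_nonzero neg_qpoch_nonzero by auto
  ultimately show ?thesis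
    using assms by (simp add: Tcoeff_def qfact_even_eq mult_ac)
qed

lemma prod_one_plus_power_quotient:
  fixes q :: real
  assumes "q \<noteq> -1" and "k < n"
  shows "(\<Prod>i\<in>{1..<n}. 1 + q ^ i) / ((\<Prod>i\<in>{1..k}. 1 + q ^ i) * (\<Prod>i\<in>{n-k..<n}. 1 + q ^ i))
    = neg_qpoch q (n - k - 1) / neg_qpoch q k"
proof -
  have "(\<Prod>i\<in>{1..<n}. 1 + q ^ i) = (\<Prod>i\<in>{1..<n-k}. 1 + q ^ i) * (\<Prod>i\<in>{n-k..<n}. 1 + q ^ i)"
    using assms(2) by (intro prod.atLeastLessThan_concat[symmetric]) auto
  also have "(\<Prod>i\<in>{1..<n-k}. 1 + q ^ i) = neg_qpoch q (n - k - 1)"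
    using assms(2) by (simp add: neg_qpoch_atLeastLessThan Suc_diff_Suc)
  finally have "(\<Prod>i\<in>{1..<n}. 1 + q ^ i) = neg_qpoch q (n - k - 1) * (\<Prod>i\<in>{n-k..<n}. 1 + q ^ i)" .
  moreover have "(\<Prod>i\<in>{n-k..<n}. 1 + q ^ i) \<noteq> 0"
    by (simp add: one_plus_power_nonzero[OF assms(1)])
  ultimately show ?thesis
    by (simp add: neg_qpoch_def)
qed

lemma prod_one_plus_power_middle:
  fixes q :: real
  assumes "q \<noteq> -1" and "2 * k < n"
  shows "(\<Prod>i\<in>{k+1..<n-k}. 1 + q ^ i) = neg_qpoch q (n - k - 1) / neg_qpoch q k"
proof -
  have "neg_qpoch q (n - k - 1) = (\<Prod>i\<in>{1..<n-k}. 1 + q ^ i)"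
    using assms(2) by (simp add: neg_qpoch_atLeastLessThan Suc_diff_Suc)
  also have "\<dots> = (\<Prod>i\<in>{1..<k+1}. 1 + q ^ i) * (\<Prod>i\<in>{k+1..<n-k}. 1 + q ^ i)"
    using assms(2) by (intro prod.atLeastLessThan_concat[symmetric]) auto
  finally have "neg_qpoch q (n - k - 1) = neg_qpoch q k * (\<Prod>i\<in>{k+1..<n-k}. 1 + q ^ i)"
    by (simp add: neg_qpoch_atLeastLessThan)
  then show ?thesis
    using neg_qpoch_nonzero[OF assms(1), of k] by simp
qed

lemma Tcoeff_first_form:
  assumes "q \<noteq> -1" and "2 * k \<le> n"
  shows "q ^ (k\<^sup>2)
      * ((\<Prod>i\<in>{1..<n}. 1 + q ^ i) / ((\<Prod>i\<in>{1..k}. 1 + q ^ i) * (\<Prod>i\<in>{n-k..<n}. 1 + q ^ i)))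
      * (if n = 0 then 1 else qint q n / qint q (n - k)) * qbinom q (n - k) k
    = Tcoeff q n k"
proof (cases "n = 0")
  case True
  with assms(2) show ?thesis by (simp add: Tcoeff_def qbinom_def)
next
  case False
  with assms(2) have "k < n" by simp
  with False show ?thesis
    unfolding prod_one_plus_power_quotient[OF assms(1) \<open>k < n\<close>] Tcoeff_eq_qbinom[OF assms(1) False assms(2)]
    by simp
qed

lemma Tcoeff_second_form:
  assumes "q \<noteq> -1" and "2 * k < n"
  shows "q ^ (k\<^sup>2) * (\<Prod>i\<in>{k+1..<n-k}. 1 + q ^ i)
      * (if n = 0 then 1 else qint q n / qint q (n - k)) * qbinom q (n - k) k
    = Tcoeff q n k"
proof -
  from assms(2) have k: "n \<noteq> 0" "2 * k \<le> n" by auto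
  show ?thesis
    unfolding prod_one_plus_power_middle[OF assms] Tcoeff_eq_qbinom[OF assms(1) k] using k by simp
qed

lemma sum_first_form_eq_sum_Tcoeff:
  assumes "q \<noteq> -1"
  shows "(\<Sum>k=0..n div 2. q ^ (k\<^sup>2)
         * ((\<Prod>i\<in>{1..<n}. 1 + q ^ i) / ((\<Prod>i\<in>{1..k}. 1 + q ^ i) * (\<Prod>i\<in>{n-k..<n}. 1 + q ^ i)))
         * (if n = 0 then 1 else qint q n / qint q (n - k))
         * qbinom q (n - k) k * s ^ k * x ^ (n - 2 * k))
    = (\<Sum>k=0..n div 2. Tcoeff q n k * s ^ k * x ^ (n - 2 * k))"
  by (intro sum.cong refl, subst Tcoeff_first_form[OF assms]) auto

lemma sum_second_form_eq_sum_Tcoeff: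
  assumes "q \<noteq> -1"
  shows "(\<Sum>k<(n + 1) div 2. q ^ (k\<^sup>2) * (\<Prod>i\<in>{k+1..<n-k}. 1 + q ^ i)
         * (if n = 0 then 1 else qint q n / qint q (n - k))
         * qbinom q (n - k) k * s ^ k * x ^ (n - 2 * k))
    = (\<Sum>k<(n + 1) div 2. Tcoeff q n k * s ^ k * x ^ (n - 2 * k))"
  by (intro sum.cong refl, subst Tcoeff_second_form[OF assms]) auto

theorem theorem2p5:
  fixes x s q :: real and n :: nat
  assumes "q \<noteq> -1"
  shows "T x s q n =
      (\<Sum>k=0..n div 2. q ^ (k^2)
         * ((\<Prod>i\<in>{1..<n}. 1 + q ^ i)
            / ((\<Prod>i\<in>{1..k}. 1 + q ^ i) * (\<Prod>i\<in>{n-k..<n}. 1 + q ^ i)))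
         * (if n = 0 then 1 else qint q n / qint q (n - k))
         * qbinom q (n - k) k * s ^ k * x ^ (n - 2*k))
    \<and> T x s q n =
      (\<Sum>k<(n+1) div 2. q ^ (k^2)
         * (\<Prod>i\<in>{k+1..<n-k}. 1 + q ^ i)
         * (if n = 0 then 1 else qint q n / qint q (n - k))
         * qbinom q (n - k) k * s ^ k * x ^ (n - 2*k))
      + (if even n then q ^ ((n div 2)^2) * s ^ (n div 2) else 0)"
proof -
  have "even n \<Longrightarrow> Tcoeff q n (n div 2) * s ^ (n div 2) * x ^ (n - 2 * (n div 2))
      = q ^ ((n div 2)\<^sup>2) * s ^ (n div 2)"
    using Tcoeff_diagonal[OF assms, of "n div 2"] by simp
  then show ?thesis
    unfolding sum_first_form_eq_sum_Tcoeff[OF assms] sum_second_form_eq_sum_Tcoeff[OF assms]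
      T_eq_sum_Tcoeff_half[OF assms] sum_upto_half_split[of _ n]
    by simp
qed

end
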